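(* Encode Tower of Hanoi configurations with $n$ disks on pegs $0,1,2$ by words $x_1\dots x_n\in\{0,1,2\}^n$ (disk $j$, the $j$-th smallest, on peg $x_j$). Let $\Gamma_n$ be the graph on $\{0,1,2\}^n$ with $u\sim v$ iff $v=a_{xy}(u)\ne u$ for some $0\le x<y\le2$, where $a_{xy}$ changes the first occurrence in $u$ of $x$ or $y$ into the other symbol. For distinct $x,y$ let the unique shortest path from $x^n$ to $y^n$ in $\Gamma_n$ be called the geodesic from $x^n$ to $y^n$. Define the partial inverse transducer with states $q_{xy}^{-1}$ for ordered pairs of distinct $x,y\in\{0,1,2\}$ (with $z$ the third element): from state $q_{xy}^{-1}$, reading the letter $x$ outputs $0$ and moves to $q_{xz}^{-1}$, reading $y$ outputs $1$ and moves to $q_{zy}^{-1}$, and reading $z$ is undefined (the computation stops). Then for all $n\ge1$, distinct $x,y$, and every ternary word $u$ of length $n$: starting at $q_{xy}^{-1}$, the word $u$ is read entirely if and only if $u^R$ is a configuration on the geodesic from $x^n$ to $y^n$; and in that case, if $u^R$ is at distance $i$ from $x^n$ along this geodesic, the output produced is $[i]_2^R$, where $[i]_2$ is the length-$n$ binary representation of $i$ with least significant digit first (padded with zeros).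
   Context: $R$ denotes word reversal. *)

theory Defs
  imports Main
begin

text \<open>Ternary words over the alphabet {0,1,2} (pegs), represented as nat lists.
  A configuration x_1...x_n has disk j (the j-th smallest) on peg x_j.\<close>

definition hanoi_vertices :: "nat \<Rightarrow> nat list set" where
  "hanoi_vertices n = {u. length u = n \<and> set u \<subseteq> {0,1,2}}"

fun hanoi_act :: "nat \<Rightarrow> nat \<Rightarrow> nat list \<Rightarrow> nat list" where
  "hanoi_act x y [] = []"
| "hanoi_act x y (c # cs) =
     (if c = x then y # cs else if c = y then x # cs else c # hanoi_act x y cs)"

definition hanoi_adj :: "nat \<Rightarrow> nat list \<Rightarrow> nat list \<Rightarrow> bool" where
  "hanoi_adj n u v \<longleftrightarrow> u \<in> hanoi_vertices n \<and> v \<in> hanoi_vertices n \<and>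
     (\<exists>x y. x < y \<and> y \<le> 2 \<and> v = hanoi_act x y u \<and> v \<noteq> u)"

definition hanoi_path :: "nat \<Rightarrow> nat list \<Rightarrow> nat list \<Rightarrow> nat list list \<Rightarrow> bool" where
  "hanoi_path n a b p \<longleftrightarrow> p \<noteq> [] \<and> hd p = a \<and> last p = b \<and>
     set p \<subseteq> hanoi_vertices n \<and>
     (\<forall>k. Suc k < length p \<longrightarrow> hanoi_adj n (p ! k) (p ! Suc k))"

definition hanoi_shortest_path :: "nat \<Rightarrow> nat list \<Rightarrow> nat list \<Rightarrow> nat list list \<Rightarrow> bool" where
  "hanoi_shortest_path n a b p \<longleftrightarrow> hanoi_path n a b p \<and>
     (\<forall>q. hanoi_path n a b q \<longrightarrow> length p \<le> length q)"

definition hanoi_geodesic :: "nat \<Rightarrow> nat \<Rightarrow> nat \<Rightarrow> nat list list" where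
  "hanoi_geodesic n x y = (THE p. hanoi_shortest_path n (replicate n x) (replicate n y) p)"

text \<open>The partial inverse transducer: state q_xy^{-1} is encoded by the pair (x,y);
  None means the computation stops (reading undefined).\<close>
definition third :: "nat \<Rightarrow> nat \<Rightarrow> nat" where
  "third x y = 3 - x - y"

fun inv_transducer :: "nat \<Rightarrow> nat \<Rightarrow> nat list \<Rightarrow> nat list option" where
  "inv_transducer x y [] = Some []"
| "inv_transducer x y (c # cs) =
     (if c = x then map_option (Cons 0) (inv_transducer x (third x y) cs)
      else if c = y then map_option (Cons 1) (inv_transducer (third x y) y cs)
      else None)"

definition bin_lsb :: "nat \<Rightarrow> nat \<Rightarrow> nat list" where
  "bin_lsb n i = map (\<lambda>j. (i div 2 ^ j) mod 2) [0..<n]"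

end

theory Submission
  imports Defs
begin

text \<open>Moving \<open>n + 1\<close> disks from peg \<open>x\<close> to peg \<open>y\<close> optimally means moving the
  \<open>n\<close> smaller disks from \<open>x\<close> to the third peg \<open>z\<close>, then the largest disk, then the
  smaller disks from \<open>z\<close> to \<open>y\<close>; this gives the recursive description \<open>hanoi_geo\<close>
  of the geodesic, with \<open>2\<^sup>n\<close> vertices. That it is the unique shortest path follows by
  induction: a path from \<open>x\<^sup>n\<^sup>+\<^sup>1\<close> to \<open>y\<^sup>n\<^sup>+\<^sup>1\<close> starts with a segment on which the largest
  disk stays on \<open>x\<close> and ends with one on which it stays on \<open>y\<close>. These segments are disjoint,
  and each projects to a path in \<open>\<Gamma>\<^sub>n\<close> between a constant word and the configuration
  with all smaller disks on a single other peg, the only one from which the largest disk can move.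

  The reversed word lists the pegs from the largest disk down. The transducer in state
  \<open>(x, y)\<close> reads the peg of the largest disk: \<open>x\<close> means the first half of the geodesic
  (bit \<open>0\<close>, continue with \<open>(x, z)\<close>), \<open>y\<close> the second half (bit \<open>1\<close>, continue with
  \<open>(z, y)\<close>). These are the binary digits of the position, most significant first.\<close>

lemma third_in_pegs:
  assumes "x \<le> 2" "y \<le> 2" "x \<noteq> y"
  shows "third x y \<le> 2" "third x y \<noteq> x" "third x y \<noteq> y"
  using assms unfolding third_def by arith+

lemma third_commute: "third y x = third x y"
  unfolding third_def by simp

lemma third_unique:
  assumes "x \<le> 2" "y \<le> 2" "c \<le> 2" "c \<noteq> x" "c \<noteq> y" "x \<noteq> y"
  shows "c = third x y"
  using assms unfolding third_def by auto

lemma hanoi_act_involutive: "hanoi_act a b (hanoi_act a b w) = w"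
  by (induction w) auto

lemma hanoi_act_id: "a \<notin> set w \<Longrightarrow> b \<notin> set w \<Longrightarrow> hanoi_act a b w = w"
  by (induction w) auto

lemma hanoi_act_snoc:
  "hanoi_act a b (w @ [d]) =
     (if a \<in> set w \<or> b \<in> set w then hanoi_act a b w @ [d] else w @ hanoi_act a b [d])"
  by (induction w) auto

lemma snoc_in_hanoi_vertices [simp]:
  "w @ [d] \<in> hanoi_vertices (Suc m) \<longleftrightarrow> w \<in> hanoi_vertices m \<and> d \<le> 2"
  unfolding hanoi_vertices_def by auto

lemma hanoi_vertices_Suc_neq_Nil: "w \<in> hanoi_vertices (Suc m) \<Longrightarrow> w \<noteq> []"
  unfolding hanoi_vertices_def by auto

lemma hanoi_adj_sym: "hanoi_adj n u v \<Longrightarrow> hanoi_adj n v u"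
  unfolding hanoi_adj_def by (metis hanoi_act_involutive)

lemma hanoi_adj_snoc_iff:
  "hanoi_adj (Suc m) (w @ [d]) (w' @ [d']) \<longleftrightarrow>
     d' = d \<and> d \<le> 2 \<and> hanoi_adj m w w' \<or>
     d' \<noteq> d \<and> d \<le> 2 \<and> d' \<le> 2 \<and> w' = w \<and> w = replicate m (third d d')"
  (is "?adj \<longleftrightarrow> ?small \<or> ?large")
proof
  assume ?adj
  then obtain a b where ab: "a < b" "b \<le> 2" "w' @ [d'] = hanoi_act a b (w @ [d])"
      "w' @ [d'] \<noteq> w @ [d]"
    unfolding hanoi_adj_def by blast
  have v: "w \<in> hanoi_vertices m" "d \<le> 2" "w' \<in> hanoi_vertices m" "d' \<le> 2"
    using \<open>?adj\<close> unfolding hanoi_adj_def by auto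
  show "?small \<or> ?large"
  proof (cases "a \<in> set w \<or> b \<in> set w")
    case True
    then have "w' = hanoi_act a b w" "d' = d"
      using ab(3) by (auto simp: hanoi_act_snoc)
    moreover have "w' \<noteq> w"
      using ab(4) \<open>d' = d\<close> by simp
    ultimately show ?thesis
      using ab v unfolding hanoi_adj_def by blast
  next
    case False
    then have "w' = w" "[d'] = hanoi_act a b [d]"
      using ab(3) by (auto simp: hanoi_act_snoc)
    then have dd: "d' \<noteq> d" "d = a \<and> d' = b \<or> d = b \<and> d' = a"
      using ab(4) by (auto split: if_splits)
    have "w = replicate m (third d d')"
    proof (rule replicate_eqI)
      show "length w = m"
        using v(1) unfolding hanoi_vertices_def by simp
      fix c assume "c \<in> set w"
      then have "c \<le> 2" "c \<noteq> a" "c \<noteq> b"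
        using v(1) False unfolding hanoi_vertices_def by auto
      then show "c = third d d'"
        using dd v third_unique by metis
    qed
    then show ?thesis
      using \<open>w' = w\<close> dd(1) v by auto
  qed
next
  assume "?small \<or> ?large"
  then show ?adj
  proof
    assume ?small
    then obtain a b where ab: "a < b" "b \<le> 2" "w' = hanoi_act a b w" "w' \<noteq> w"
      and v: "w \<in> hanoi_vertices m" "w' \<in> hanoi_vertices m" "d' = d" "d \<le> 2"
      unfolding hanoi_adj_def by auto
    then have "a \<in> set w \<or> b \<in> set w"
      using hanoi_act_id by metis
    then have "hanoi_act a b (w @ [d]) = w' @ [d']"
      using ab v by (simp add: hanoi_act_snoc)
    moreover have "w' @ [d'] \<noteq> w @ [d]"
      using ab(4) by simp
    ultimately show ?adj
      using ab v unfolding hanoi_adj_def by (metis snoc_in_hanoi_vertices)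
  next
    assume large: ?large
    then have c: "third d d' \<le> 2" "third d d' \<noteq> d" "third d d' \<noteq> d'"
      using third_in_pegs by auto
    have "hanoi_act (min d d') (max d d') (w @ [d]) = w' @ [d']"
      using large c by (auto simp: hanoi_act_snoc)
    moreover have "min d d' < max d d'" "max d d' \<le> 2"
      using large by auto
    moreover have "w \<in> hanoi_vertices m"
      using large c(1) unfolding hanoi_vertices_def by auto
    moreover have "w' @ [d'] \<noteq> w @ [d]"
      using large by simp
    ultimately show ?adj
      using large unfolding hanoi_adj_def by (metis snoc_in_hanoi_vertices)
  qed
qed

lemma hanoi_path_iff_successively:
  "hanoi_path n a b p \<longleftrightarrow> p \<noteq> [] \<and> hd p = a \<and> last p = b \<and>
     set p \<subseteq> hanoi_vertices n \<and> successively (hanoi_adj n) p"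
  unfolding hanoi_path_def successively_conv_nth by blast

lemma hanoi_path_append_iff:
  assumes "p \<noteq> []" "q \<noteq> []"
  shows "hanoi_path n a c (p @ q) \<longleftrightarrow>
    hanoi_path n a (last p) p \<and> hanoi_adj n (last p) (hd q) \<and> hanoi_path n (hd q) c q"
  using assms by (auto simp: hanoi_path_iff_successively successively_append_iff)

lemma hanoi_path_rev: "hanoi_path n a b p \<Longrightarrow> hanoi_path n b a (rev p)"
  by (auto simp: hanoi_path_iff_successively hd_rev last_rev hanoi_adj_sym
      elim: successively_mono)

lemma hanoi_path_snoc_iff:
  "hanoi_path (Suc m) (a @ [x]) (b @ [x]) (map (\<lambda>w. w @ [x]) q) \<longleftrightarrow>
     x \<le> 2 \<and> hanoi_path m a b q"
proof (cases "q = []")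
  case False
  then have "(\<lambda>w. w @ [x]) ` set q \<subseteq> hanoi_vertices (Suc m) \<longleftrightarrow>
      x \<le> 2 \<and> set q \<subseteq> hanoi_vertices m"
    by (auto dest: subsetD[OF _ imageI[OF hd_in_set]])
  moreover have "successively (\<lambda>u v. hanoi_adj (Suc m) (u @ [x]) (v @ [x])) q \<longleftrightarrow>
      successively (hanoi_adj m) q" if "x \<le> 2"
    using that by (simp add: hanoi_adj_snoc_iff)
  ultimately show ?thesis
    using False by (auto simp: hanoi_path_iff_successively successively_map hd_map last_map)
qed (simp add: hanoi_path_def)

lemma map_snoc_butlast:
  "(\<And>w. w \<in> set ws \<Longrightarrow> w \<noteq> [] \<and> last w = x) \<Longrightarrow> map (\<lambda>w. w @ [x]) (map butlast ws) = ws"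
  by (induction ws) (auto, metis append_butlast_last_id)

text \<open>\<open>q\<close> is the initial segment of \<open>p\<close> during which the largest disk rests on \<open>x\<close>,
  with that disk removed; \<open>D\<close> starts when it first moves, to peg \<open>d\<close>.\<close>
lemma hanoi_path_leave_peg:
  assumes path: "hanoi_path (Suc m) (a @ [x]) b p" and leave: "last b \<noteq> x"
  obtains q d D where "p = map (\<lambda>w. w @ [x]) q @ D"
    "hanoi_path m a (replicate m (third x d)) q" "D \<noteq> []" "last (hd D) = d" "d \<noteq> x" "d \<le> 2"
proof -
  define T where "T = takeWhile (\<lambda>w. last w = x) p"
  define D where "D = dropWhile (\<lambda>w. last w = x) p"
  define d where "d = last (hd D)"
  have p: "p \<noteq> []" "hd p = a @ [x]" "last p = b" "set p \<subseteq> hanoi_vertices (Suc m)"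
    using path unfolding hanoi_path_def by auto
  have "T \<noteq> []"
    using p(1,2) unfolding T_def by (cases p) auto
  have "D \<noteq> []"
    using p(1,3) leave unfolding D_def by auto
  have "d \<noteq> x"
    using hd_dropWhile \<open>D \<noteq> []\<close> unfolding D_def d_def by blast
  have snoc_T: "w \<noteq> [] \<and> last w = x" if "w \<in> set T" for w
    using that p(4) hanoi_vertices_Suc_neq_Nil unfolding T_def by (blast dest: set_takeWhileD)
  have "hd D \<in> hanoi_vertices (Suc m)"
    using p(4) \<open>D \<noteq> []\<close> unfolding D_def by (metis hd_in_set set_dropWhileD subsetD)
  then have "hd D \<noteq> []"
    by (rule hanoi_vertices_Suc_neq_Nil)
  have "p = T @ D"
    unfolding T_def D_def by simp
  then have T: "hanoi_path (Suc m) (a @ [x]) (last T) T"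
    and adj: "hanoi_adj (Suc m) (last T) (hd D)"
    using path hanoi_path_append_iff[OF \<open>T \<noteq> []\<close> \<open>D \<noteq> []\<close>] by blast+
  have last_T: "last T = butlast (last T) @ [x]"
    using snoc_T[of "last T"] \<open>T \<noteq> []\<close> by (metis append_butlast_last_id last_in_set)
  have "hd D = butlast (hd D) @ [d]"
    using \<open>hd D \<noteq> []\<close> unfolding d_def by simp
  then have "butlast (last T) = replicate m (third x d)" "d \<le> 2"
    using adj last_T \<open>d \<noteq> x\<close> hanoi_adj_snoc_iff by (metis, metis)
  moreover have T_snoc: "T = map (\<lambda>w. w @ [x]) (map butlast T)"
    using map_snoc_butlast snoc_T by metis
  ultimately have "hanoi_path m a (replicate m (third x d)) (map butlast T)"
    using T last_T hanoi_path_snoc_iff by metis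
  show thesis
    using that \<open>p = T @ D\<close> T_snoc \<open>hanoi_path m a _ _\<close> \<open>D \<noteq> []\<close> \<open>d \<noteq> x\<close> \<open>d \<le> 2\<close>
    unfolding d_def by metis
qed

fun hanoi_geo :: "nat \<Rightarrow> nat \<Rightarrow> nat \<Rightarrow> nat list list" where
  "hanoi_geo 0 x y = [[]]"
| "hanoi_geo (Suc n) x y =
     map (\<lambda>w. w @ [x]) (hanoi_geo n x (third x y)) @ map (\<lambda>w. w @ [y]) (hanoi_geo n (third x y) y)"

lemma length_hanoi_geo [simp]: "length (hanoi_geo n x y) = 2 ^ n"
  by (induction n arbitrary: x y) auto

lemma hanoi_geo_neq_Nil [simp]: "hanoi_geo n x y \<noteq> []"
  using length_hanoi_geo[of n x y] by (metis list.size(3) power_not_zero zero_neq_numeral)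

lemma hanoi_path_hanoi_geo:
  assumes "x \<le> 2" "y \<le> 2" "x \<noteq> y"
  shows "hanoi_path n (replicate n x) (replicate n y) (hanoi_geo n x y)"
  using assms
proof (induction n arbitrary: x y)
  case 0
  then show ?case
    unfolding hanoi_path_def hanoi_vertices_def by auto
next
  case (Suc m)
  define z where "z = third x y"
  have z: "z \<le> 2" "z \<noteq> x" "z \<noteq> y"
    using third_in_pegs[OF Suc.prems] unfolding z_def by auto
  have first: "hanoi_path (Suc m) (replicate m x @ [x]) (replicate m z @ [x])
      (map (\<lambda>w. w @ [x]) (hanoi_geo m x z))"
    using Suc z by (simp add: hanoi_path_snoc_iff)
  have second: "hanoi_path (Suc m) (replicate m z @ [y]) (replicate m y @ [y])
      (map (\<lambda>w. w @ [y]) (hanoi_geo m z y))"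
    using Suc z by (simp add: hanoi_path_snoc_iff)
  have "hanoi_adj (Suc m) (replicate m z @ [x]) (replicate m z @ [y])"
    using Suc.prems by (simp add: hanoi_adj_snoc_iff z_def)
  moreover have "last (map (\<lambda>w. w @ [x]) (hanoi_geo m x z)) = replicate m z @ [x]"
    "hd (map (\<lambda>w. w @ [y]) (hanoi_geo m z y)) = replicate m z @ [y]"
    using first second unfolding hanoi_path_def by auto
  ultimately have "hanoi_path (Suc m) (replicate m x @ [x]) (replicate m y @ [y])
      (hanoi_geo (Suc m) x y)"
    using first second hanoi_path_append_iff unfolding hanoi_geo.simps z_def[symmetric]
    by (metis hanoi_geo_neq_Nil map_is_Nil_conv)
  then show ?case
    by (simp add: replicate_append_same)
qed

lemma append_eq_append_disjoint:
  assumes "xs @ ys = us @ vs" "\<forall>w\<in>set xs. P w" "\<forall>w\<in>set vs. \<not> P w"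
  shows "\<exists>r. us = xs @ r \<and> ys = r @ vs"
proof -
  from assms(1) obtain r where "xs = us @ r \<and> r @ ys = vs \<or> xs @ r = us \<and> ys = r @ vs"
    unfolding append_eq_append_conv2 by blast
  then show ?thesis
  proof
    assume r: "xs = us @ r \<and> r @ ys = vs"
    then have "r = []"
      using assms(2,3) by (cases r) auto
    then show ?thesis
      using r by auto
  qed auto
qed

lemma hanoi_path_segments:
  assumes "x \<le> 2" "y \<le> 2" "x \<noteq> y"
    and path: "hanoi_path (Suc m) (replicate m x @ [x]) (replicate m y @ [y]) p"
  obtains q r q' c c' where "p = map (\<lambda>w. w @ [x]) q @ r @ map (\<lambda>w. w @ [y]) q'"
    "hanoi_path m (replicate m x) (replicate m c) q" "c \<le> 2" "c \<noteq> x"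
    "hanoi_path m (replicate m c') (replicate m y) q'" "c' \<le> 2" "c' \<noteq> y"
    "r = [] \<Longrightarrow> c = third x y \<and> c' = third x y"
proof -
  obtain q d D where p: "p = map (\<lambda>w. w @ [x]) q @ D"
    and q: "hanoi_path m (replicate m x) (replicate m (third x d)) q"
    and D: "last (hd D) = d" and d: "d \<noteq> x" "d \<le> 2"
    by (rule hanoi_path_leave_peg[OF path]) (use assms(3) in simp)
  obtain q' d' D' where p': "rev p = map (\<lambda>w. w @ [y]) q' @ D'"
    and q': "hanoi_path m (replicate m y) (replicate m (third y d')) q'"
    and D': "last (hd D') = d'" and d': "d' \<noteq> y" "d' \<le> 2"
    by (rule hanoi_path_leave_peg[OF hanoi_path_rev[OF path]]) (use assms(3) in simp)
  have "map (\<lambda>w. w @ [x]) q @ D = rev D' @ map (\<lambda>w. w @ [y]) (rev q')"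
    using p arg_cong[OF p', of rev] by (simp add: rev_map)
  moreover have "\<forall>w\<in>set (map (\<lambda>w. w @ [x]) q). last w = x"
    "\<forall>w\<in>set (map (\<lambda>w. w @ [y]) (rev q')). last w \<noteq> x"
    using assms(3) by auto
  ultimately obtain r where r: "rev D' = map (\<lambda>w. w @ [x]) q @ r"
    "D = r @ map (\<lambda>w. w @ [y]) (rev q')"
    using append_eq_append_disjoint by blast
  have "q \<noteq> []" "q' \<noteq> []"
    using q q' unfolding hanoi_path_def by auto
  have "d = y \<and> d' = x" if "r = []"
  proof
    show "d = y"
      using D r \<open>r = []\<close> \<open>q' \<noteq> []\<close> by (simp add: hd_map)
    have "D' = map (\<lambda>w. w @ [x]) (rev q)"
      using arg_cong[OF r(1), of rev] \<open>r = []\<close> by (simp add: rev_map)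
    then show "d' = x"
      using D' \<open>q \<noteq> []\<close> by (simp add: hd_map)
  qed
  then show thesis
    using that[of q r "rev q'" "third x d" "third y d'"] p r q hanoi_path_rev[OF q']
      third_in_pegs[of x d] third_in_pegs[of y d'] assms d d'
    by (auto simp: third_commute)
qed

lemma hanoi_path_geo_unique_shortest:
  assumes "x \<le> 2" "y \<le> 2" "x \<noteq> y" "hanoi_path n (replicate n x) (replicate n y) p"
  shows "2 ^ n \<le> length p \<and> (length p = 2 ^ n \<longrightarrow> p = hanoi_geo n x y)"
  using assms
proof (induction n arbitrary: x y p)
  case 0
  then have "p \<noteq> []" "set p \<subseteq> {[]}"
    unfolding hanoi_path_def hanoi_vertices_def by auto
  then show ?case
    by (cases p) auto
next
  case (Suc m)
  have "hanoi_path (Suc m) (replicate m x @ [x]) (replicate m y @ [y]) p"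
    using Suc.prems(4) by (simp add: replicate_append_same)
  then obtain q r q' c c' where p: "p = map (\<lambda>w. w @ [x]) q @ r @ map (\<lambda>w. w @ [y]) q'"
    and q: "hanoi_path m (replicate m x) (replicate m c) q" "c \<le> 2" "c \<noteq> x"
    and q': "hanoi_path m (replicate m c') (replicate m y) q'" "c' \<le> 2" "c' \<noteq> y"
    and pegs: "r = [] \<Longrightarrow> c = third x y \<and> c' = third x y"
    by (rule hanoi_path_segments[OF Suc.prems(1-3)]) blast
  have q_ge: "2 ^ m \<le> length q" and q_eq: "length q = 2 ^ m \<Longrightarrow> q = hanoi_geo m x c"
    using Suc.IH[OF Suc.prems(1) q(2) q(3)[symmetric] q(1)] by auto
  have q'_ge: "2 ^ m \<le> length q'" and q'_eq: "length q' = 2 ^ m \<Longrightarrow> q' = hanoi_geo m c' y"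
    using Suc.IH[OF q'(2) Suc.prems(2) q'(3) q'(1)] by auto
  have len: "length p = length q + length r + length q'"
    using p by simp
  show ?case
  proof (intro conjI impI)
    show "2 ^ Suc m \<le> length p"
      using q_ge q'_ge len by simp
    assume "length p = 2 ^ Suc m"
    then have "length q + length r + length q' = 2 * 2 ^ m"
      using len by simp
    then have "length q = 2 ^ m" "length q' = 2 ^ m" "length r = 0"
      using q_ge q'_ge by linarith+
    then show "p = hanoi_geo (Suc m) x y"
      using p q_eq q'_eq pegs by simp
  qed
qed

lemma hanoi_geodesic_eq_hanoi_geo:
  assumes "x \<le> 2" "y \<le> 2" "x \<noteq> y"
  shows "hanoi_geodesic n x y = hanoi_geo n x y"
  unfolding hanoi_geodesic_def
proof (rule the_equality)
  show "hanoi_shortest_path n (replicate n x) (replicate n y) (hanoi_geo n x y)"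
    using hanoi_path_hanoi_geo[OF assms] hanoi_path_geo_unique_shortest[OF assms]
    unfolding hanoi_shortest_path_def by simp
next
  fix p assume "hanoi_shortest_path n (replicate n x) (replicate n y) p"
  then have "hanoi_path n (replicate n x) (replicate n y) p" "length p \<le> 2 ^ n"
    using hanoi_path_hanoi_geo[OF assms] unfolding hanoi_shortest_path_def by fastforce+
  then show "p = hanoi_geo n x y"
    using hanoi_path_geo_unique_shortest[OF assms] by fastforce
qed

lemma bin_lsb_Suc: "bin_lsb (Suc m) i = bin_lsb m i @ [i div 2 ^ m mod 2]"
  unfolding bin_lsb_def by simp

lemma bin_lsb_mod: "bin_lsb m (i mod 2 ^ m) = bin_lsb m i"
  unfolding bin_lsb_def
  by (simp add: of_bool_odd_eq_mod_2[symmetric] even_mod_exp_div_exp_iff)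

lemma inv_transducer_hanoi_geo_nth:
  assumes "x \<le> 2" "y \<le> 2" "x \<noteq> y" "i < 2 ^ n"
  shows "inv_transducer x y (rev (hanoi_geo n x y ! i)) = Some (rev (bin_lsb n i))"
  using assms
proof (induction n arbitrary: x y i)
  case 0
  then show ?case
    by (simp add: bin_lsb_def)
next
  case (Suc m)
  define z where "z = third x y"
  have z: "z \<le> 2" "z \<noteq> x" "z \<noteq> y"
    using third_in_pegs[OF Suc.prems(1-3)] unfolding z_def by auto
  show ?case
  proof (cases "i < 2 ^ m")
    case True
    then have "rev (hanoi_geo (Suc m) x y ! i) = x # rev (hanoi_geo m x z ! i)"
      by (simp add: nth_append z_def)
    moreover have "rev (bin_lsb (Suc m) i) = 0 # rev (bin_lsb m i)"
      using True by (simp add: bin_lsb_Suc)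
    ultimately show ?thesis
      using Suc.IH[OF _ z(1) z(2)[symmetric] True] Suc.prems by (simp add: z_def)
  next
    case False
    then have i: "i - 2 ^ m < 2 ^ m" "i mod 2 ^ m = i - 2 ^ m" "i div 2 ^ m = 1"
      using Suc.prems(4) by (simp_all add: mod_if div_if)
    then have "rev (hanoi_geo (Suc m) x y ! i) = y # rev (hanoi_geo m z y ! (i - 2 ^ m))"
      using False by (simp add: nth_append z_def)
    moreover have "bin_lsb m (i - 2 ^ m) = bin_lsb m i"
      using i(2) bin_lsb_mod by metis
    then have "rev (bin_lsb (Suc m) i) = 1 # rev (bin_lsb m (i - 2 ^ m))"
      using i(3) by (simp add: bin_lsb_Suc)
    ultimately show ?thesis
      using Suc.IH[OF z(1) _ z(3) i(1)] Suc.prems by (simp add: z_def)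
  qed
qed

lemma inv_transducer_defined_in_hanoi_geo:
  "inv_transducer x y u \<noteq> None \<Longrightarrow> rev u \<in> set (hanoi_geo (length u) x y)"
  by (induction u arbitrary: x y) (auto split: if_splits)

theorem mainTheorem15:
  fixes n x y :: nat and u :: "nat list"
  assumes "n \<ge> 1" and "x \<le> 2" and "y \<le> 2" and "x \<noteq> y"
    and "u \<in> hanoi_vertices n"
  shows "(inv_transducer x y u \<noteq> None \<longleftrightarrow> rev u \<in> set (hanoi_geodesic n x y))
    \<and> (\<forall>i. i < length (hanoi_geodesic n x y) \<and> hanoi_geodesic n x y ! i = rev u \<longrightarrow>
          inv_transducer x y u = Some (rev (bin_lsb n i)))"
proof -
  have geodesic: "hanoi_geodesic n x y = hanoi_geo n x y"
    using hanoi_geodesic_eq_hanoi_geo assms(2-4) by blast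
  have "length u = n"
    using assms(5) unfolding hanoi_vertices_def by simp
  have position_output: "inv_transducer x y u = Some (rev (bin_lsb n i))"
    if "i < 2 ^ n" "hanoi_geo n x y ! i = rev u" for i
    using inv_transducer_hanoi_geo_nth[OF assms(2-4) that(1)] that(2) by simp
  show ?thesis
    unfolding geodesic
  proof (intro conjI allI impI iffI)
    assume "inv_transducer x y u \<noteq> None"
    then show "rev u \<in> set (hanoi_geo n x y)"
      using inv_transducer_defined_in_hanoi_geo \<open>length u = n\<close> by blast
  next
    assume "rev u \<in> set (hanoi_geo n x y)"
    then show "inv_transducer x y u \<noteq> None"
      using position_output by (auto simp: in_set_conv_nth)
  next
    fix i assume "i < length (hanoi_geo n x y) \<and> hanoi_geo n x y ! i = rev u"
    then show "inv_transducer x y u = Some (rev (bin_lsb n i))"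
      using position_output by simp
  qed
qed

end
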